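(* Let $\varepsilon\in(0,1)$ and let $G_0$ be the symmetric game with payoff matrix $$U_0= \begin{pmatrix} 0 & -1 & \varepsilon & 0 \\ \varepsilon & 0 & -1 & 0 \\ -1 & \varepsilon & 0 & 0 \\ \frac{-1+\varepsilon}{3} & \frac{-1+\varepsilon}{3} & \frac{-1+\varepsilon}{3} & 0 \end{pmatrix}.$$ Let $n=(1/3,1/3,1/3,0)$ and $E_0=\{\lambda n+(1-\lambda)e_4:\lambda\in[0,1]\}\subset S_4$. If $C$ is a closed subset of $S_4$ disjoint from $E_0$, then there exists a neighborhood $\mathcal N$ of $U_0$ in the space of $4\times4$ real matrices such that, for every payoff matrix $U\in\mathcal N$ and every initial condition $x(0)\in C$, the solution of the Brown-von Neumann-Nash dynamics with payoff matrix $U$ satisfies $x_4(t)\to 0$ as $t\to+\infty$.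
   Context: The Brown-von Neumann-Nash dynamics for payoff matrix $U$ on $S_4$ is $\dot x_i=k_i(x)-x_i\sum_{j=1}^4 k_j(x)$ with $k_i(x)=\max(0,(Ux)_i-x\cdot Ux)$. $e_4$ is the fourth vertex of $S_4$. *)

theory Defs
  imports "HOL-Analysis.Analysis"
begin

text \<open>Coordinates of R^4 are indexed by the type 4 = {0,1,2,3};
  paper index i corresponds to index i-1 here (so e_4 is index 3).\<close>

definition simplex4 :: "(real^4) set" where
  "simplex4 = {x. (\<forall>i. 0 \<le> x $ i) \<and> (\<Sum>i\<in>UNIV. x $ i) = 1}"

definition bnn_k :: "real^4^4 \<Rightarrow> real^4 \<Rightarrow> 4 \<Rightarrow> real" where
  "bnn_k U x i = max 0 ((U *v x) $ i - x \<bullet> (U *v x))"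

definition bnn_field :: "real^4^4 \<Rightarrow> real^4 \<Rightarrow> real^4" where
  "bnn_field U x = (\<chi> i. bnn_k U x i - x $ i * (\<Sum>j\<in>UNIV. bnn_k U x j))"

definition U0 :: "real \<Rightarrow> real^4^4" where
  "U0 \<epsilon> = (\<chi> i j.
     if i = 0 then (if j = 0 then 0 else if j = 1 then -1 else if j = 2 then \<epsilon> else 0)
     else if i = 1 then (if j = 0 then \<epsilon> else if j = 1 then 0 else if j = 2 then -1 else 0)
     else if i = 2 then (if j = 0 then -1 else if j = 1 then \<epsilon> else if j = 2 then 0 else 0)
     else (if j = 3 then 0 else (-1 + \<epsilon>) / 3))"

definition nvec :: "real^4" where
  "nvec = (\<chi> i. if i = 3 then 0 else 1/3)"

definition E0 :: "(real^4) set" where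
  "E0 = {l *\<^sub>R nvec + (1 - l) *\<^sub>R axis 3 1 | l. l \<in> {0..1}}"

end

theory Submission
  imports Defs
begin

text \<open>The excess payoffs \<open>k\<^sub>i\<close> of \<open>U0 \<epsilon>\<close> give the function \<open>V = \<Sum>\<^sub>i k\<^sub>i\<^sup>2\<close> on the simplex, which
  vanishes exactly on \<open>E0\<close>. Along the BNN dynamics of \<open>U0 \<epsilon>\<close> its derivative is
  \<open>2 (f \<bullet> U0 f - (\<Sum>\<^sub>i k\<^sub>i) V)\<close>, where \<open>f\<close> is the vector field; the quadratic form of \<open>U0 \<epsilon>\<close> on the
  tangent space of the simplex is positive semidefinite, and near \<open>E0\<close> it dominates the cubic term.
  So a thin band \<open>g1 \<le> V \<le> g2\<close> below the values of \<open>V\<close> on the compact set \<open>C\<close> cannot be crossed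
  downwards, and by compactness this persists for all \<open>U\<close> near \<open>U0 \<epsilon>\<close>. Above the band the fourth
  strategy earns strictly less than the average, uniformly in \<open>U\<close>, so \<open>k\<^sub>4 = 0\<close> and
  \<open>x\<^sub>4' = - x\<^sub>4 \<Sum>\<^sub>j k\<^sub>j \<le> - c x\<^sub>4\<close>: the share of strategy 4 decays exponentially.\<close>

lemma four_eq_zero: "(4::4) = 0"
  by simp

lemma sum_UNIV_4: "sum f (UNIV::4 set) = f 0 + f 1 + f 2 + f 3"
  using sum_4[of f] unfolding four_eq_zero by (simp add: ac_simps)

lemma all_4_iff: "(\<forall>i::4. P i) \<longleftrightarrow> P 0 \<and> P 1 \<and> P 2 \<and> P 3"
  using forall_4[of P] unfolding four_eq_zero by auto

lemma inner_4: "(x::real^4) \<bullet> y = x$0*y$0 + x$1*y$1 + x$2*y$2 + x$3*y$3"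
  by (simp add: inner_vec_def sum_UNIV_4)

lemma matrix_vector_mult_4:
  "((M::real^4^4) *v x) $ i = M$i$0*x$0 + M$i$1*x$1 + M$i$2*x$2 + M$i$3*x$3"
  by (simp add: matrix_vector_mult_def sum_UNIV_4)

lemma simplex4_iff:
  "x \<in> simplex4 \<longleftrightarrow>
     0 \<le> x$0 \<and> 0 \<le> x$1 \<and> 0 \<le> x$2 \<and> 0 \<le> x$3 \<and> x$0 + x$1 + x$2 + x$3 = 1"
  unfolding simplex4_def by (simp add: all_4_iff sum_UNIV_4)

lemma compact_simplex4: "compact simplex4"
proof (rule compact_eq_bounded_closed[THEN iffD2], rule conjI)
  have "norm x \<le> 1" if "x \<in> simplex4" for x
    using norm_le_l1_cart[of x] that unfolding simplex4_def by simp
  then show "bounded simplex4"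
    by (auto simp: bounded_iff)
  have "simplex4 = (\<Inter>i. {x. 0 \<le> x$i}) \<inter> {x. (\<Sum>i\<in>UNIV. x$i) = 1}"
    unfolding simplex4_def by auto
  moreover have "closed {x::real^4. (\<Sum>i\<in>UNIV. x$i) = 1}" "closed {x::real^4. 0 \<le> x$i}" for i
    by (intro closed_Collect_eq closed_Collect_le continuous_intros continuous_on_component
        continuous_on_id)+
  ultimately show "closed simplex4"
    by (metis closed_Int closed_INT)
qed

lemma has_real_derivative_vec_nth:
  assumes "(x has_vector_derivative f) F"
  shows "((\<lambda>t. x t $ i) has_real_derivative f $ i) F"
  using bounded_linear.has_vector_derivative[OF bounded_linear_vec_nth assms]
  unfolding has_real_derivative_iff_has_vector_derivative .

lemma DERIV_max0_power2: "((\<lambda>u::real. (max 0 u)^2) has_real_derivative 2 * max 0 u) (at u)"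
proof (cases u "0::real" rule: linorder_cases)
  case less
  have "\<forall>\<^sub>F y in nhds u. (max 0 y)^2 = 0"
    using eventually_nhds_in_open[of "{..<0}" u] less by (auto elim!: eventually_mono)
  then show ?thesis
    using less by (subst has_field_derivative_cong_eventually[where g="\<lambda>y. 0"])
      (auto simp: eventually_at_filter elim: eventually_mono)
next
  case equal
  have "\<forall>\<^sub>F y in at 0. max 0 (y::real) = ((max 0 y)^2 - (max 0 0)^2) / (y - 0)"
    unfolding eventually_at_filter by (auto simp: max_def power2_eq_square)
  moreover have "((\<lambda>y::real. max 0 y) \<longlongrightarrow> max 0 0) (at 0)"
    by (intro tendsto_intros)
  ultimately have "((\<lambda>y::real. ((max 0 y)^2 - (max 0 0)^2) / (y - 0)) \<longlongrightarrow> 0) (at 0)"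
    using tendsto_cong by force
  then show ?thesis
    using equal unfolding has_field_derivative_iff by simp
next
  case greater
  have "\<forall>\<^sub>F y in nhds u. (max 0 y)^2 = y^2"
    using eventually_nhds_in_open[of "{0<..}" u] greater by (auto elim!: eventually_mono)
  moreover have "((\<lambda>y. y^2) has_real_derivative 2 * u) (at u)"
    by (auto intro!: derivative_eq_intros)
  ultimately show ?thesis
    using greater by (subst has_field_derivative_cong_eventually[where g="\<lambda>y. y^2"])
      (auto simp: eventually_at_filter elim: eventually_mono)
qed

lemma at_within_nonneg_reals: "(0::real) < s \<Longrightarrow> at s within {0..} = at s"
  by (rule at_within_interior) simp

lemma DERIV_nonpos_imp_decreasing_nonneg:
  fixes \<phi> \<phi>' :: "real \<Rightarrow> real"
  assumes "\<And>t. 0 \<le> t \<Longrightarrow> (\<phi> has_real_derivative \<phi>' t) (at t within {0..})"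
    and "\<And>t. 0 < t \<Longrightarrow> \<phi>' t \<le> 0" and "0 \<le> a" "a \<le> b"
  shows "\<phi> b \<le> \<phi> a"
proof (rule DERIV_nonpos_imp_decreasing_open[OF \<open>a \<le> b\<close>])
  fix s assume "a < s" "s < b"
  then have "0 < s"
    using \<open>0 \<le> a\<close> by linarith
  then show "\<exists>y. (\<phi> has_real_derivative y) (at s) \<and> y \<le> 0"
    using assms(1,2)[of s] at_within_nonneg_reals[of s] by auto
next
  have "continuous_on {0..} \<phi>"
    by (rule DERIV_continuous_on) (use assms in auto)
  then show "continuous_on {a..b} \<phi>"
    by (rule continuous_on_subset) (use assms in auto)
qed

text \<open>Between the last visit to \<open>[g2, \<infinity>)\<close> and the first visit to \<open>(-\<infinity>, g1]\<close>, the function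
  would stay strictly between \<open>g1\<close> and \<open>g2\<close> and yet decrease.\<close>

lemma DERIV_barrier:
  fixes \<phi> \<phi>' :: "real \<Rightarrow> real"
  assumes deriv: "\<And>t. 0 \<le> t \<Longrightarrow> (\<phi> has_real_derivative \<phi>' t) (at t within {0..})"
    and band: "\<And>t. 0 < t \<Longrightarrow> g1 < \<phi> t \<Longrightarrow> \<phi> t < g2 \<Longrightarrow> 0 \<le> \<phi>' t"
    and "g1 < g2" "g2 \<le> \<phi> 0" "0 \<le> T"
  shows "g1 \<le> \<phi> T"
proof (rule ccontr)
  assume "\<not> g1 \<le> \<phi> T"
  have cont: "continuous_on {a..b} \<phi>" if "0 \<le> a" for a b
    using DERIV_continuous_on[of "{0..}" \<phi> \<phi>'] deriv that
    by (auto intro: continuous_on_subset)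
  have "compact ({0..T} \<inter> \<phi> -` {..g1})"
    unfolding compact_eq_bounded_closed
    by (intro conjI bounded_Int disjI1 bounded_closed_interval continuous_closed_preimage cont) auto
  moreover have "T \<in> {0..T} \<inter> \<phi> -` {..g1}"
    using \<open>\<not> g1 \<le> \<phi> T\<close> \<open>0 \<le> T\<close> by auto
  ultimately obtain t1 where t1: "t1 \<in> {0..T} \<inter> \<phi> -` {..g1}"
      and first: "\<And>s. s \<in> {0..T} \<inter> \<phi> -` {..g1} \<Longrightarrow> t1 \<le> s"
    using compact_attains_inf by (metis empty_iff)
  have "compact ({0..t1} \<inter> \<phi> -` {g2..})"
    unfolding compact_eq_bounded_closed
    by (intro conjI bounded_Int disjI1 bounded_closed_interval continuous_closed_preimage cont) auto
  moreover have "0 \<in> {0..t1} \<inter> \<phi> -` {g2..}"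
    using t1 \<open>g2 \<le> \<phi> 0\<close> by auto
  ultimately obtain t0 where t0: "t0 \<in> {0..t1} \<inter> \<phi> -` {g2..}"
      and last: "\<And>s. s \<in> {0..t1} \<inter> \<phi> -` {g2..} \<Longrightarrow> s \<le> t0"
    using compact_attains_sup by (metis empty_iff)
  have "\<phi> t0 \<le> \<phi> t1"
  proof (rule DERIV_nonneg_imp_increasing_open[of t0 t1 \<phi>])
    fix s assume s: "t0 < s" "s < t1"
    then have "g1 < \<phi> s" "\<phi> s < g2"
      using first[of s] last[of s] t0 t1 by force+
    then show "\<exists>y. (\<phi> has_real_derivative y) (at s) \<and> 0 \<le> y"
      using deriv[of s] band[of s] at_within_nonneg_reals[of s] s t0 by auto
  qed (use t0 t1 cont in auto)
  then show False
    using t0 t1 \<open>g1 < g2\<close> by auto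
qed

lemma DERIV_le_neg_mult_imp_tendsto_0:
  fixes \<psi> \<psi>' :: "real \<Rightarrow> real"
  assumes deriv: "\<And>t. 0 \<le> t \<Longrightarrow> (\<psi> has_real_derivative \<psi>' t) (at t within {0..})"
    and le: "\<And>t. 0 < t \<Longrightarrow> \<psi>' t \<le> - c * \<psi> t" and "0 < c"
    and nonneg: "\<And>t. 0 \<le> t \<Longrightarrow> 0 \<le> \<psi> t"
  shows "(\<psi> \<longlongrightarrow> 0) at_top"
proof (rule tendsto_sandwich)
  have bound: "\<psi> t \<le> \<psi> 0 * exp (- c * t)" if "0 \<le> t" for t
  proof -
    have "\<psi> t * exp (c * t) \<le> \<psi> 0 * exp (c * 0)"
    proof (rule DERIV_nonpos_imp_decreasing_nonneg[where \<phi>="\<lambda>t. \<psi> t * exp (c * t)"])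
      show "((\<lambda>t. \<psi> t * exp (c * t)) has_real_derivative
          \<psi>' s * exp (c * s) + \<psi> s * (exp (c * s) * c)) (at s within {0..})" if "0 \<le> s" for s
        using that by (auto intro!: derivative_eq_intros deriv)
      show "\<psi>' s * exp (c * s) + \<psi> s * (exp (c * s) * c) \<le> 0" if "0 < s" for s
        using mult_right_mono[OF le[OF that], of "exp (c * s)"] by (simp add: algebra_simps)
    qed (use that in auto)
    then show ?thesis
      by (simp add: exp_minus field_simps)
  qed
  then show "\<forall>\<^sub>F t in at_top. \<psi> t \<le> \<psi> 0 * exp (- c * t)"
    by (auto simp: eventually_at_top_linorder)
  show "\<forall>\<^sub>F t in at_top. 0 \<le> \<psi> t"
    using nonneg by (auto simp: eventually_at_top_linorder)
  have "filterlim (\<lambda>t. exp (c * t)) at_top at_top"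
    using \<open>0 < c\<close> by (intro filterlim_compose[OF exp_at_top]
        filterlim_tendsto_pos_mult_at_top[OF tendsto_const _ filterlim_ident])
  then have "((\<lambda>t. \<psi> 0 * inverse (exp (c * t))) \<longlongrightarrow> \<psi> 0 * 0) at_top"
    by (intro tendsto_intros tendsto_inverse_0_at_top)
  then show "((\<lambda>t. \<psi> 0 * exp (- c * t)) \<longlongrightarrow> 0) at_top"
    by (simp add: exp_minus)
qed (rule tendsto_const)

lemma compact_pos_imp_uniformly_pos:
  fixes f :: "'a::topological_space \<Rightarrow> real"
  assumes "compact S" "continuous_on S f" "\<forall>x\<in>S. 0 < f x"
  shows "\<exists>c>0. \<forall>x\<in>S. c \<le> f x"
proof (cases "S = {}")
  case False
  then obtain x0 where "x0 \<in> S" "\<forall>x\<in>S. f x0 \<le> f x"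
    using continuous_attains_inf[OF assms(1) False assms(2)] by auto
  then show ?thesis
    using assms(3) by (intro exI[of _ "f x0"]) simp
qed (auto intro: exI[of _ 1])

lemma eventually_nhds_uniformly_pos:
  fixes g :: "'a::topological_space \<Rightarrow> 'b::topological_space \<Rightarrow> real"
  assumes cont: "continuous_on UNIV (\<lambda>p. g (fst p) (snd p))" and "compact S"
    and pos: "\<forall>x\<in>S. 0 < g u0 x"
  shows "\<exists>c>0. \<forall>\<^sub>F u in nhds u0. \<forall>x\<in>S. c \<le> g u x"
proof -
  have "continuous_on S (\<lambda>x. (u0, x))"
    by (intro continuous_intros)
  from continuous_on_compose2[OF cont this] have "continuous_on S (g u0)"
    by simp
  then obtain c where "0 < c" and c: "\<forall>x\<in>S. c \<le> g u0 x"
    using compact_pos_imp_uniformly_pos[OF \<open>compact S\<close> _ pos] by auto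
  let ?W = "{p. c / 2 < g (fst p) (snd p)}"
  have W_open: "open ?W"
    by (rule open_Collect_less[OF continuous_on_const cont])
  have W_tube: "{u0} \<times> S \<subseteq> ?W"
  proof
    fix p assume "p \<in> {u0} \<times> S"
    then show "p \<in> ?W"
      using c \<open>0 < c\<close> by fastforce
  qed
  obtain X where "u0 \<in> X" "open X" "X \<times> S \<subseteq> ?W"
    using Elementary_Topology.tube_lemma[OF \<open>compact S\<close> W_open W_tube] by auto
  then have "\<forall>\<^sub>F u in nhds u0. \<forall>x\<in>S. c / 2 \<le> g u x"
    unfolding eventually_nhds by (intro exI[of _ X]) (auto simp: less_imp_le)
  then show ?thesis
    using \<open>0 < c\<close> half_gt_zero by blast
qed

section \<open>Brown-von Neumann-Nash dynamics\<close>

definition bnn_excess :: "real^4^4 \<Rightarrow> real^4 \<Rightarrow> 4 \<Rightarrow> real" where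
  "bnn_excess U x i = (U *v x) $ i - x \<bullet> (U *v x)"

lemma bnn_k_eq_max_excess: "bnn_k U x i = max 0 (bnn_excess U x i)"
  by (simp add: bnn_k_def bnn_excess_def)

lemma bnn_k_nonneg: "0 \<le> bnn_k U x i"
  by (simp add: bnn_k_def)

lemma bnn_field_nth: "bnn_field U x $ i = bnn_k U x i - x $ i * (\<Sum>j\<in>UNIV. bnn_k U x j)"
  by (simp add: bnn_field_def)

lemma sum_mult_bnn_excess:
  "(\<Sum>i\<in>UNIV. x$i * bnn_excess U x i) = (x \<bullet> (U *v x)) * (1 - (\<Sum>i\<in>UNIV. x$i))"
  unfolding bnn_excess_def inner_vec_def
  by (simp add: right_diff_distrib sum_subtractf flip: sum_distrib_right)

lemma bnn_trajectory_sum_eq_1: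
  assumes deriv: "\<forall>t\<ge>0. (x has_vector_derivative bnn_field U (x t)) (at t within {0..})"
    and init: "x 0 $ 0 + x 0 $ 1 + x 0 $ 2 + x 0 $ 3 = 1" and "0 \<le> t"
  shows "x t $ 0 + x t $ 1 + x t $ 2 + x t $ 3 = 1"
proof -
  define \<sigma> where "\<sigma> = (\<lambda>s. x s $ 0 + x s $ 1 + x s $ 2 + x s $ 3)"
  define K where "K = (\<lambda>s. \<Sum>j\<in>UNIV. bnn_k U (x s) j)"
  have "(\<sigma> has_real_derivative K s * (1 - \<sigma> s)) (at s within {0..})" if "0 \<le> s" for s
  proof -
    have "(\<sigma> has_real_derivative (\<Sum>i\<in>UNIV. bnn_field U (x s) $ i)) (at s within {0..})"
      unfolding \<sigma>_def sum_UNIV_4 using deriv that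
      by (intro DERIV_add has_real_derivative_vec_nth) auto
    moreover have "(\<Sum>i\<in>UNIV. bnn_field U (x s) $ i) = K s * (1 - \<sigma> s)"
      unfolding bnn_field_nth sum_UNIV_4 K_def \<sigma>_def by (simp add: algebra_simps)
    ultimately show ?thesis
      by simp
  qed
  then have "((\<lambda>s. (\<sigma> s - 1)^2) has_real_derivative - 2 * K s * (\<sigma> s - 1)^2) (at s within {0..})"
    if "0 \<le> s" for s
    using that by (auto intro!: derivative_eq_intros simp: power2_eq_square algebra_simps)
  moreover have "0 \<le> K s" for s
    unfolding K_def by (simp add: sum_nonneg bnn_k_nonneg)
  ultimately have "(\<sigma> t - 1)^2 \<le> (\<sigma> 0 - 1)^2"
    using \<open>0 \<le> t\<close> by (intro DERIV_nonpos_imp_decreasing_nonneg[where \<phi>="\<lambda>s. (\<sigma> s - 1)^2"]) auto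
  then show ?thesis
    using init unfolding \<sigma>_def by simp
qed

text \<open>A negative coordinate would have to decrease from zero, but there the field equals
  \<open>bnn_k U x i \<ge> 0\<close>; so \<open>(max 0 (- x i))\<^sup>2\<close> is nonincreasing.\<close>

lemma bnn_trajectory_nonneg:
  assumes deriv: "\<forall>t\<ge>0. (x has_vector_derivative bnn_field U (x t)) (at t within {0..})"
    and "0 \<le> x 0 $ i" "0 \<le> t"
  shows "0 \<le> x t $ i"
proof -
  let ?\<phi> = "\<lambda>s. (max 0 (- x s $ i))^2"
  have "(?\<phi> has_real_derivative 2 * max 0 (- x s $ i) * (- bnn_field U (x s) $ i))
      (at s within {0..})" if "0 \<le> s" for s
    using DERIV_chain2[OF DERIV_max0_power2
        DERIV_minus[OF has_real_derivative_vec_nth[OF deriv[rule_format, OF that]]]]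
    by simp
  moreover have "2 * max 0 (- x s $ i) * (- bnn_field U (x s) $ i) \<le> 0" for s
  proof (cases "0 \<le> x s $ i")
    case False
    then have "x s $ i * (\<Sum>j\<in>UNIV. bnn_k U (x s) j) \<le> 0"
      by (simp add: mult_nonpos_nonneg sum_nonneg bnn_k_nonneg)
    then show ?thesis
      using bnn_k_nonneg[of U "x s" i] unfolding bnn_field_nth
      by (simp add: mult_nonneg_nonpos)
  qed simp
  ultimately have "?\<phi> t \<le> ?\<phi> 0"
    using \<open>0 \<le> t\<close> by (intro DERIV_nonpos_imp_decreasing_nonneg[where \<phi>="?\<phi>"]) auto
  then show ?thesis
    using \<open>0 \<le> x 0 $ i\<close> by (simp add: max_def split: if_splits)
qed

lemma bnn_trajectory_in_simplex4:
  assumes "\<forall>t\<ge>0. (x has_vector_derivative bnn_field U (x t)) (at t within {0..})"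
    and "x 0 \<in> simplex4" "0 \<le> t"
  shows "x t \<in> simplex4"
  using assms bnn_trajectory_sum_eq_1 bnn_trajectory_nonneg unfolding simplex4_iff by metis

text \<open>\<open>bnn_lyapunov_deriv M U\<close> is the derivative of \<open>bnn_lyapunov M\<close> along the BNN field of a
  possibly different matrix \<open>U\<close>.\<close>

definition bnn_lyapunov :: "real^4^4 \<Rightarrow> real^4 \<Rightarrow> real" where
  "bnn_lyapunov M x = (\<Sum>i\<in>UNIV. (bnn_k M x i)^2)"

definition bnn_excess_deriv :: "real^4^4 \<Rightarrow> real^4 \<Rightarrow> real^4 \<Rightarrow> 4 \<Rightarrow> real" where
  "bnn_excess_deriv M x f i = (M *v f) $ i - (f \<bullet> (M *v x) + x \<bullet> (M *v f))"

definition bnn_lyapunov_deriv :: "real^4^4 \<Rightarrow> real^4^4 \<Rightarrow> real^4 \<Rightarrow> real" where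
  "bnn_lyapunov_deriv M U x =
     (\<Sum>i\<in>UNIV. 2 * bnn_k M x i * bnn_excess_deriv M x (bnn_field U x) i)"

lemma has_real_derivative_bnn_excess:
  assumes "(x has_vector_derivative f) (at t within S)"
  shows "((\<lambda>t. bnn_excess M (x t) i) has_real_derivative bnn_excess_deriv M (x t) f i)
    (at t within S)"
proof -
  have Mx: "((\<lambda>t. M *v x t) has_vector_derivative M *v f) (at t within S)"
    using bounded_linear.has_vector_derivative[OF matrix_vector_mul_bounded_linear assms] .
  have "((\<lambda>t. (M *v x t) $ i - x t \<bullet> (M *v x t)) has_vector_derivative
      (M *v f) $ i - (x t \<bullet> (M *v f) + f \<bullet> (M *v x t))) (at t within S)"
    by (intro has_vector_derivative_diff bounded_linear.has_vector_derivative[OF bounded_linear_vec_nth]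
        bounded_bilinear.has_vector_derivative[OF bounded_bilinear_inner] assms Mx)
  then show ?thesis
    unfolding bnn_excess_def bnn_excess_deriv_def has_real_derivative_iff_has_vector_derivative
    by (simp add: add.commute)
qed

lemma has_real_derivative_bnn_lyapunov:
  assumes "(x has_vector_derivative bnn_field U (x t)) (at t within S)"
  shows "((\<lambda>t. bnn_lyapunov M (x t)) has_real_derivative bnn_lyapunov_deriv M U (x t))
    (at t within S)"
  unfolding bnn_lyapunov_def bnn_lyapunov_deriv_def bnn_k_eq_max_excess
  using DERIV_chain2[OF DERIV_max0_power2 has_real_derivative_bnn_excess[OF assms]]
  by (intro DERIV_sum) (simp add: mult.assoc)

lemma bnn_lyapunov_pos_imp_sum_bnn_k_pos:
  assumes "0 < bnn_lyapunov M y"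
  shows "0 < (\<Sum>j\<in>UNIV. bnn_k M y j)"
proof -
  obtain i where "(bnn_k M y i)^2 \<noteq> 0"
    using assms sum.not_neutral_contains_not_neutral unfolding bnn_lyapunov_def
    by (metis less_irrefl)
  then have "0 < bnn_k M y i"
    using bnn_k_nonneg[of M y i] by simp
  also have "\<dots> \<le> (\<Sum>j\<in>UNIV. bnn_k M y j)"
    by (rule member_le_sum) (simp_all add: bnn_k_nonneg)
  finally show ?thesis .
qed

text \<open>The key identity is \<open>bnn_k M x i * bnn_excess M x i = (bnn_k M x i)\<^sup>2\<close>.\<close>

lemma bnn_lyapunov_deriv_self:
  "bnn_lyapunov_deriv M M x =
     2 * (bnn_field M x \<bullet> (M *v bnn_field M x)
          - (\<Sum>j\<in>UNIV. bnn_k M x j) * bnn_lyapunov M x)"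
proof -
  define k where "k = bnn_k M x"
  define K where "K = (\<Sum>j\<in>UNIV. k j)"
  define f where "f = bnn_field M x"
  have f_inner: "f \<bullet> v = (\<Sum>i\<in>UNIV. k i * v $ i) - K * (x \<bullet> v)" for v
    unfolding inner_4 sum_UNIV_4 f_def bnn_field_nth K_def k_def by (simp add: algebra_simps)
  have "k i * bnn_excess M x i = (k i)^2" for i
    unfolding k_def bnn_k_eq_max_excess by (simp add: max_def power2_eq_square)
  then have "bnn_lyapunov M x = (\<Sum>i\<in>UNIV. k i * bnn_excess M x i)"
    unfolding bnn_lyapunov_def k_def by simp
  also have "\<dots> = (\<Sum>i\<in>UNIV. k i * (M *v x) $ i) - K * (x \<bullet> (M *v x))"
    unfolding bnn_excess_def K_def by (simp add: right_diff_distrib sum_subtractf sum_distrib_right)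
  finally have fMx: "f \<bullet> (M *v x) = bnn_lyapunov M x"
    using f_inner by simp
  have "bnn_lyapunov_deriv M M x
      = 2 * ((\<Sum>i\<in>UNIV. k i * (M *v f) $ i) - K * (f \<bullet> (M *v x) + x \<bullet> (M *v f)))"
    unfolding bnn_lyapunov_deriv_def bnn_excess_deriv_def k_def[symmetric] f_def[symmetric] K_def
    by (simp add: right_diff_distrib sum_subtractf sum_distrib_left sum_distrib_right mult.assoc)
  then show ?thesis
    using f_inner[of "M *v f"] fMx unfolding f_def k_def K_def by (simp add: algebra_simps)
qed

lemma continuous_on_bnn_excess:
  "continuous_on UNIV (\<lambda>p::(real^4^4) \<times> (real^4). bnn_excess (fst p) (snd p) i)"
  unfolding bnn_excess_def matrix_vector_mult_4 inner_4
  by (intro continuous_intros continuous_on_component continuous_on_fst continuous_on_snd)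

lemma continuous_on_bnn_k:
  "continuous_on UNIV (\<lambda>p::(real^4^4) \<times> (real^4). bnn_k (fst p) (snd p) i)"
  unfolding bnn_k_eq_max_excess by (intro continuous_intros continuous_on_bnn_excess)

lemma continuous_on_bnn_k_right: "continuous_on UNIV (\<lambda>x. bnn_k M x i)"
  unfolding bnn_k_eq_max_excess bnn_excess_def matrix_vector_mult_4 inner_4
  by (intro continuous_intros continuous_on_component continuous_on_id)

lemma continuous_on_bnn_lyapunov: "continuous_on UNIV (bnn_lyapunov M)"
  unfolding bnn_lyapunov_def by (intro continuous_intros continuous_on_bnn_k_right)

lemma continuous_on_bnn_lyapunov_deriv:
  "continuous_on UNIV (\<lambda>p::(real^4^4) \<times> (real^4). bnn_lyapunov_deriv M (fst p) (snd p))"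
proof -
  have k: "continuous_on UNIV (\<lambda>p::(real^4^4) \<times> (real^4). bnn_k M (snd p) i)" for i
    by (rule continuous_on_compose2[OF continuous_on_bnn_k_right continuous_on_snd]) auto
  have f: "continuous_on UNIV (\<lambda>p::(real^4^4) \<times> (real^4). bnn_field (fst p) (snd p))"
    unfolding bnn_field_def
    by (intro continuous_on_vec_lambda continuous_intros continuous_on_bnn_k continuous_on_component)
  show ?thesis
    unfolding bnn_lyapunov_deriv_def bnn_excess_deriv_def matrix_vector_mult_4 inner_4
    using k by (intro continuous_intros continuous_on_component f) auto
qed

lemma bnn_lyapunov_stays_above:
  assumes deriv: "\<forall>t\<ge>0. (x has_vector_derivative bnn_field U (x t)) (at t within {0..})"
    and "x 0 \<in> simplex4" "g1 < g2" "g2 \<le> bnn_lyapunov M (x 0)"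
    and band: "\<forall>y\<in>simplex4. g1 \<le> bnn_lyapunov M y \<longrightarrow> bnn_lyapunov M y \<le> g2
                 \<longrightarrow> 0 \<le> bnn_lyapunov_deriv M U y"
    and "0 \<le> t"
  shows "g1 \<le> bnn_lyapunov M (x t)"
proof (rule DERIV_barrier[where \<phi>="\<lambda>t. bnn_lyapunov M (x t)"])
  show "((\<lambda>t. bnn_lyapunov M (x t)) has_real_derivative bnn_lyapunov_deriv M U (x s))
      (at s within {0..})" if "0 \<le> s" for s
    using has_real_derivative_bnn_lyapunov deriv that by blast
  show "0 \<le> bnn_lyapunov_deriv M U (x s)"
    if "0 < s" "g1 < bnn_lyapunov M (x s)" "bnn_lyapunov M (x s) < g2" for s
    using band bnn_trajectory_in_simplex4[OF deriv \<open>x 0 \<in> simplex4\<close>, of s] that by auto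
qed (use assms in auto)

text \<open>Once strategy \<open>i\<close> has nonpositive excess payoff, its share obeys
  \<open>x\<^sub>i' = - x\<^sub>i \<Sum>\<^sub>j k\<^sub>j \<le> - c x\<^sub>i\<close>.\<close>

lemma bnn_coordinate_tendsto_0:
  assumes deriv: "\<forall>t\<ge>0. (x has_vector_derivative bnn_field U (x t)) (at t within {0..})"
    and "x 0 \<in> simplex4" "0 < c"
    and rate: "\<forall>t\<ge>0. c \<le> (\<Sum>j\<in>UNIV. bnn_k U (x t) j)"
    and excess: "\<forall>t\<ge>0. bnn_excess U (x t) i \<le> 0"
  shows "((\<lambda>t. x t $ i) \<longlongrightarrow> 0) at_top"
proof (rule DERIV_le_neg_mult_imp_tendsto_0[OF _ _ \<open>0 < c\<close>])
  have nonneg: "0 \<le> x t $ i" if "0 \<le> t" for t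
    using bnn_trajectory_in_simplex4[OF deriv \<open>x 0 \<in> simplex4\<close> that]
    unfolding simplex4_def by auto
  then show "0 \<le> x t $ i" if "0 \<le> t" for t
    using that .
  show "((\<lambda>t. x t $ i) has_real_derivative bnn_field U (x t) $ i) (at t within {0..})"
    if "0 \<le> t" for t
    using has_real_derivative_vec_nth deriv that by blast
  show "bnn_field U (x t) $ i \<le> - c * x t $ i" if "0 < t" for t
    using mult_left_mono[OF rate[rule_format, of t] nonneg[of t]] excess[rule_format, of t] that
    unfolding bnn_field_nth bnn_k_eq_max_excess by (simp add: mult.commute)
qed

section \<open>The game \<open>U0 \<epsilon>\<close>\<close>

lemma U0_mult:
  "(U0 e *v x) $ 0 = - x$1 + e * x$2"
  "(U0 e *v x) $ 1 = e * x$0 - x$2"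
  "(U0 e *v x) $ 2 = - x$0 + e * x$1"
  "(U0 e *v x) $ 3 = (e - 1) / 3 * (x$0 + x$1 + x$2)"
  by (simp_all add: matrix_vector_mult_4 U0_def algebra_simps add_divide_distrib diff_divide_distrib)

definition dispersion :: "real^4 \<Rightarrow> real" where
  "dispersion x = ((x$0 - x$1)^2 + (x$1 - x$2)^2 + (x$2 - x$0)^2) / 2"

definition centred :: "real^4 \<Rightarrow> 4 \<Rightarrow> real" where
  "centred x i = x$i - (x$0 + x$1 + x$2) / 3"

lemma dispersion_nonneg: "0 \<le> dispersion x"
  by (simp add: dispersion_def)

lemma dispersion_eq_0_iff: "dispersion x = 0 \<longleftrightarrow> x$0 = x$1 \<and> x$1 = x$2"
proof -
  have "dispersion x = 0 \<longleftrightarrow> (x$0 - x$1)^2 + (x$1 - x$2)^2 + (x$2 - x$0)^2 = 0"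
    by (simp add: dispersion_def)
  also have "\<dots> \<longleftrightarrow> x$0 = x$1 \<and> x$1 = x$2"
    by (smt (verit) power2_less_eq_zero_iff sum_power2_eq_zero_iff)
  finally show ?thesis .
qed

lemma continuous_on_dispersion: "continuous_on UNIV dispersion"
  unfolding dispersion_def by (intro continuous_intros continuous_on_component continuous_on_id) simp

lemma sum_centred_power2: "centred x 0 ^ 2 + centred x 1 ^ 2 + centred x 2 ^ 2 = 2/3 * dispersion x"
  unfolding centred_def dispersion_def by (simp add: field_simps power2_eq_square)

lemma sum_centred: "centred x 0 + centred x 1 + centred x 2 = 0"
  unfolding centred_def by (simp add: field_simps)

lemma inner_U0_mult:
  "x \<bullet> (U0 e *v x) = x$0 * (- x$1 + e * x$2) + x$1 * (e * x$0 - x$2) + x$2 * (- x$0 + e * x$1)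
     + x$3 * ((e - 1) / 3 * (x$0 + x$1 + x$2))"
  by (simp add: inner_4 U0_mult)

lemma bnn_excess_U0:
  assumes "x$0 + x$1 + x$2 + x$3 = 1"
  shows "bnn_excess (U0 e) x 0 = - centred x 1 + e * centred x 2 - (1 - e) / 3 * dispersion x"
    and "bnn_excess (U0 e) x 1 = - centred x 2 + e * centred x 0 - (1 - e) / 3 * dispersion x"
    and "bnn_excess (U0 e) x 2 = - centred x 0 + e * centred x 1 - (1 - e) / 3 * dispersion x"
    and "bnn_excess (U0 e) x 3 = (e - 1) / 3 * dispersion x"
proof -
  have x3: "x$3 = 1 - x$0 - x$1 - x$2"
    using assms by simp
  show "bnn_excess (U0 e) x 0 = - centred x 1 + e * centred x 2 - (1 - e) / 3 * dispersion x"
    "bnn_excess (U0 e) x 1 = - centred x 2 + e * centred x 0 - (1 - e) / 3 * dispersion x"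
    "bnn_excess (U0 e) x 2 = - centred x 0 + e * centred x 1 - (1 - e) / 3 * dispersion x"
    "bnn_excess (U0 e) x 3 = (e - 1) / 3 * dispersion x"
    unfolding bnn_excess_def inner_U0_mult U0_mult dispersion_def centred_def x3
    by (simp_all add: field_simps power2_eq_square)
qed

lemma bnn_k_U0_3:
  assumes "e \<le> 1" "x \<in> simplex4"
  shows "bnn_k (U0 e) x 3 = 0"
proof -
  have "bnn_excess (U0 e) x 3 = (e - 1) / 3 * dispersion x"
    using assms(2) by (intro bnn_excess_U0) (simp add: simplex4_iff)
  moreover have "(e - 1) / 3 * dispersion x \<le> 0"
    using assms(1) dispersion_nonneg[of x] by (simp add: mult_nonpos_nonneg)
  ultimately show ?thesis
    unfolding bnn_k_eq_max_excess by simp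
qed

lemma bnn_excess_U0_3_neg:
  assumes "0 < e" "e < 1" "x \<in> simplex4" "0 < dispersion x"
  shows "bnn_excess (U0 e) x 3 < 0"
proof -
  have "bnn_excess (U0 e) x 3 = (e - 1) / 3 * dispersion x"
    using assms(3) by (intro bnn_excess_U0) (simp add: simplex4_iff)
  also have "\<dots> < 0"
    using assms by (intro mult_neg_pos) auto
  finally show ?thesis .
qed

lemma dispersion_pos_if_notin_E0:
  assumes "x \<in> simplex4" "x \<notin> E0"
  shows "0 < dispersion x"
proof (rule ccontr)
  assume "\<not> 0 < dispersion x"
  then have eq: "x$0 = x$1" "x$1 = x$2"
    using dispersion_nonneg[of x] dispersion_eq_0_iff[of x] by auto
  have "x = (3 * x$0) *\<^sub>R nvec + (1 - 3 * x$0) *\<^sub>R axis 3 1"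
    using assms(1) eq unfolding simplex4_iff vec_eq_iff all_4_iff by (simp add: nvec_def axis_def)
  moreover have "3 * x$0 \<in> {0..1}"
    using assms(1) eq unfolding simplex4_iff by auto
  ultimately show False
    using assms(2) unfolding E0_def by blast
qed

lemma rps_best_reply_nonzero:
  fixes p q r e A :: real
  assumes e: "0 < e" "e < 1" and "0 \<le> q" "0 \<le> r" "p + q + r = 1"
    and A: "A = (e - 1) * (p * q + q * r + r * p)"
    and best: "- q + e * r \<le> A" "- p + e * q \<le> A"
  shows "p \<noteq> 0"
proof
  assume "p = 0"
  moreover have "0 \<le> (1 - e) * q * r"
    using e assms(3,4) by simp
  ultimately have "e * q \<le> 0"
    using best(2) unfolding A by (simp add: algebra_simps)
  then have "q = 0" "r = 1" "A = 0"
    using e assms(3-5) \<open>p = 0\<close> A by (auto simp: mult_le_0_iff)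
  then show False
    using best(1) e by simp
qed

text \<open>On the face \<open>x\<^sub>4 = 0\<close> the game is a rock-paper-scissors game in which a win pays \<open>\<epsilon>\<close> and a
  loss costs \<open>1\<close>; its only symmetric equilibrium is the barycentre.\<close>

lemma rps_equilibrium_uniform:
  fixes p q r e A :: real
  assumes e: "0 < e" "e < 1" and nonneg: "0 \<le> p" "0 \<le> q" "0 \<le> r" and "p + q + r = 1"
    and A: "A = p * (- q + e * r) + q * (e * p - r) + r * (- p + e * q)"
    and best: "- q + e * r \<le> A" "e * p - r \<le> A" "- p + e * q \<le> A"
    and support: "p * (- q + e * r - A) = 0" "q * (e * p - r - A) = 0" "r * (- p + e * q - A) = 0"
  shows "p = q \<and> q = r"
proof -
  have "A = (e - 1) * (p * q + q * r + r * p)" "A = (e - 1) * (q * r + r * p + p * q)"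
    "A = (e - 1) * (r * p + p * q + q * r)"
    unfolding A by algebra+
  then have "p \<noteq> 0" "q \<noteq> 0" "r \<noteq> 0"
    using rps_best_reply_nonzero[of e q r p A] rps_best_reply_nonzero[of e r p q A]
      rps_best_reply_nonzero[of e p q r A] e nonneg best \<open>p + q + r = 1\<close>
    by (simp_all add: algebra_simps)
  then have eq: "- q + e * r = A" "e * p - r = A" "- p + e * q = A"
    using support by auto
  have "(1 + e + e^2) * (p - q) = (1 + e) * ((p - r) + e * (p - q)) + ((r - q) + e * (r - p))"
    by algebra
  also have "\<dots> = 0"
    using eq by (simp add: algebra_simps)
  finally have "(1 + e + e^2) * (p - q) = 0" .
  moreover have "0 < 1 + e + e^2"
    using e by (simp add: add_pos_nonneg)
  ultimately have "p = q"
    by simp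
  moreover have "(p - r) + e * (p - q) = 0"
    using eq by (simp add: algebra_simps)
  ultimately show ?thesis
    by simp
qed

text \<open>The excess payoffs are orthogonal to \<open>x\<close>, and the fourth one is negative off the line
  \<open>x\<^sub>1 = x\<^sub>2 = x\<^sub>3\<close>; so if no excess payoff were positive, \<open>x\<close> would be an equilibrium of the
  rock-paper-scissors face, i.e. on that line.\<close>

lemma dispersion_pos_imp_excess_pos:
  assumes e: "0 < e" "e < 1" and x: "x \<in> simplex4" and "0 < dispersion x"
  shows "\<exists>i. 0 < bnn_excess (U0 e) x i"
proof (rule ccontr)
  assume "\<nexists>i. 0 < bnn_excess (U0 e) x i"
  then have le: "bnn_excess (U0 e) x i \<le> 0" for i
    by (simp add: not_less)
  have s: "0 \<le> x$0" "0 \<le> x$1" "0 \<le> x$2" "0 \<le> x$3" "x$0 + x$1 + x$2 + x$3 = 1"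
    using x unfolding simplex4_iff by auto
  have neg3: "bnn_excess (U0 e) x 3 < 0"
    using bnn_excess_U0_3_neg assms by blast
  have "(\<Sum>i\<in>UNIV. x$i * bnn_excess (U0 e) x i) = 0"
    using s(5) unfolding sum_mult_bnn_excess by (simp add: sum_UNIV_4)
  moreover have "x$i * bnn_excess (U0 e) x i \<le> 0" for i
    using le[of i] x by (simp add: mult_nonneg_nonpos simplex4_def)
  ultimately have zero: "x$i * bnn_excess (U0 e) x i = 0" for i
    unfolding sum_UNIV_4 using exhaust_4[of i] four_eq_zero
    by (smt (verit, best))
  then have "x$3 = 0"
    using neg3 by (metis mult_eq_0_iff order.irrefl)
  define A where "A = x$0 * (- x$1 + e * x$2) + x$1 * (e * x$0 - x$2) + x$2 * (- x$0 + e * x$1)"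
  have excess: "bnn_excess (U0 e) x 0 = - x$1 + e * x$2 - A"
      "bnn_excess (U0 e) x 1 = e * x$0 - x$2 - A" "bnn_excess (U0 e) x 2 = - x$0 + e * x$1 - A"
    unfolding bnn_excess_def inner_U0_mult U0_mult A_def \<open>x$3 = 0\<close> by simp_all
  have "x$0 = x$1 \<and> x$1 = x$2"
    by (rule rps_equilibrium_uniform[OF e s(1-3) _ A_def])
      (use s \<open>x$3 = 0\<close> le[of 0] le[of 1] le[of 2] zero[of 0] zero[of 1] zero[of 2] excess in auto)
  then show False
    using \<open>0 < dispersion x\<close> dispersion_eq_0_iff[of x] by simp
qed

lemma bnn_lyapunov_U0_pos_iff:
  assumes "0 < e" "e < 1" "x \<in> simplex4"
  shows "0 < bnn_lyapunov (U0 e) x \<longleftrightarrow> 0 < dispersion x"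
proof
  assume pos: "0 < bnn_lyapunov (U0 e) x"
  show "0 < dispersion x"
  proof (rule ccontr)
    assume "\<not> 0 < dispersion x"
    then have "dispersion x = 0"
      using dispersion_nonneg[of x] by simp
    moreover from this have "centred x 0 = 0" "centred x 1 = 0" "centred x 2 = 0"
      using dispersion_eq_0_iff[of x] unfolding centred_def by auto
    ultimately have "\<forall>i. bnn_excess (U0 e) x i = 0"
      using assms(3) unfolding all_4_iff simplex4_iff by (simp add: bnn_excess_U0)
    then have "bnn_lyapunov (U0 e) x = 0"
      unfolding bnn_lyapunov_def bnn_k_eq_max_excess by simp
    then show False
      using pos by simp
  qed
next
  assume "0 < dispersion x"
  then obtain i where "0 < bnn_excess (U0 e) x i"
    using dispersion_pos_imp_excess_pos assms by blast
  then have "0 < (bnn_k (U0 e) x i)^2"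
    unfolding bnn_k_eq_max_excess by simp
  also have "\<dots> \<le> bnn_lyapunov (U0 e) x"
    unfolding bnn_lyapunov_def by (rule member_le_sum) auto
  finally show "0 < bnn_lyapunov (U0 e) x" .
qed

lemma inner_U0_mult_tangent:
  assumes "f$3 = - (f$0 + f$1 + f$2)"
  shows "f \<bullet> (U0 e *v f) = (1 - e) / 2 * ((f$0)^2 + (f$1)^2 + (f$2)^2 - (f$0 + f$1 + f$2)^2 / 3)"
  unfolding inner_4 U0_mult assms by (simp add: field_simps power2_eq_square)

lemma bnn_lyapunov_deriv_U0:
  assumes "e \<le> 1" "x \<in> simplex4"
  defines "k \<equiv> bnn_k (U0 e) x"
  defines "K \<equiv> k 0 + k 1 + k 2"
  shows "bnn_lyapunov_deriv (U0 e) (U0 e) x =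
    2 * ((1 - e) / 2 * ((k 0 - K/3 - K * centred x 0)^2 + (k 1 - K/3 - K * centred x 1)^2
          + (k 2 - K/3 - K * centred x 2)^2) - K * ((k 0)^2 + (k 1)^2 + (k 2)^2))"
proof -
  define f where "f = bnn_field (U0 e) x"
  have k3: "k 3 = 0"
    unfolding k_def using bnn_k_U0_3[OF assms(1,2)] .
  have sum_k: "(\<Sum>j\<in>UNIV. bnn_k (U0 e) x j) = K"
    unfolding sum_UNIV_4 K_def k_def[symmetric] k3 by simp
  have f: "f$i = k i - x$i * K" for i
    unfolding f_def bnn_field_nth sum_k k_def ..
  have x3: "x$3 = 1 - (x$0 + x$1 + x$2)"
    using assms(2) unfolding simplex4_iff by simp
  have f3: "f$3 = - (f$0 + f$1 + f$2)"
    unfolding f k3 x3 K_def by (simp add: algebra_simps)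
  have "f \<bullet> (U0 e *v f) = (1 - e) / 2 * ((f$0 - (f$0 + f$1 + f$2) / 3)^2
      + (f$1 - (f$0 + f$1 + f$2) / 3)^2 + (f$2 - (f$0 + f$1 + f$2) / 3)^2)"
    using inner_U0_mult_tangent[OF f3, of e] by (simp add: field_simps power2_eq_square)
  moreover have "f$i - (f$0 + f$1 + f$2) / 3 = k i - K/3 - K * centred x i" for i
    unfolding f centred_def K_def by (simp add: field_simps)
  ultimately have "f \<bullet> (U0 e *v f) = (1 - e) / 2 * ((k 0 - K/3 - K * centred x 0)^2
      + (k 1 - K/3 - K * centred x 1)^2 + (k 2 - K/3 - K * centred x 2)^2)"
    by simp
  moreover have "bnn_lyapunov (U0 e) x = (k 0)^2 + (k 1)^2 + (k 2)^2"
    unfolding bnn_lyapunov_def sum_UNIV_4 k_def[symmetric] k3 by simp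
  ultimately show ?thesis
    using bnn_lyapunov_deriv_self[of "U0 e" x] unfolding sum_k f_def by simp
qed

lemma sum_deviation_power2_lower_bound:
  fixes k0 k1 k2 z0 z1 z2 \<rho> :: real
  assumes "k0 = 0 \<or> k1 = 0 \<or> k2 = 0" and z: "z0^2 + z1^2 + z2^2 \<le> \<rho>^2"
  defines "K \<equiv> k0 + k1 + k2" and "S \<equiv> k0^2 + k1^2 + k2^2"
  shows "S / 6 - 2 * \<rho>^2 * S
    \<le> (k0 - K/3 - K * z0)^2 + (k1 - K/3 - K * z1)^2 + (k2 - K/3 - K * z2)^2"
proof -
  have half_sq: "u^2 / 2 - v^2 \<le> (u - v)^2" for u v :: real
    using zero_le_power2[of "u - 2 * v"] by (simp add: power2_eq_square algebra_simps)
  have K2: "K^2 \<le> 2 * S"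
    using assms(1) zero_le_power2[of "k0 - k1"] zero_le_power2[of "k1 - k2"]
      zero_le_power2[of "k2 - k0"]
    unfolding K_def S_def by (auto simp: power2_eq_square algebra_simps)
  have "(k0 - K/3)^2 + (k1 - K/3)^2 + (k2 - K/3)^2 = S - K^2 / 3"
    unfolding K_def S_def by (simp add: power2_eq_square field_simps)
  then have "(S - K^2 / 3) / 2 - K^2 * (z0^2 + z1^2 + z2^2)
      \<le> (k0 - K/3 - K * z0)^2 + (k1 - K/3 - K * z1)^2 + (k2 - K/3 - K * z2)^2"
    using half_sq[of "k0 - K/3" "K * z0"] half_sq[of "k1 - K/3" "K * z1"]
      half_sq[of "k2 - K/3" "K * z2"]
    by (simp add: power_mult_distrib algebra_simps)
  moreover have "K^2 * (z0^2 + z1^2 + z2^2) \<le> 2 * S * \<rho>^2"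
    using mult_mono[OF K2 z] by (simp add: S_def)
  ultimately show ?thesis
    using K2 by (simp add: algebra_simps)
qed

text \<open>Near the barycentre the quadratic-form term, of order \<open>b \<Sum> k\<^sub>i\<^sup>2\<close>, beats the cubic term
  \<open>K \<Sum> k\<^sub>i\<^sup>2\<close>, because \<open>K\<close> is small there and one of the \<open>k\<^sub>i\<close> vanishes.\<close>

lemma near_barycentre_estimate:
  fixes k0 k1 k2 z0 z1 z2 b \<rho> :: real
  assumes "k0 = 0 \<or> k1 = 0 \<or> k2 = 0" and S2: "0 < k0^2 + k1^2 + k2^2"
    and z: "z0^2 + z1^2 + z2^2 \<le> \<rho>^2"
    and b: "0 < b" "b < 1/2" "\<rho> = b / 100"
    and K: "k0 + k1 + k2 \<le> 6 * \<rho>"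
  defines "K \<equiv> k0 + k1 + k2"
  shows "K * (k0^2 + k1^2 + k2^2)
    < b * ((k0 - K/3 - K * z0)^2 + (k1 - K/3 - K * z1)^2 + (k2 - K/3 - K * z2)^2)"
proof -
  define S where "S = k0^2 + k1^2 + k2^2"
  have "\<rho>^2 \<le> \<rho> / 200"
    using b by (simp add: power2_eq_square)
  then have "b * \<rho>^2 \<le> 1/2 * (\<rho> / 200)"
    using b by (intro mult_mono) auto
  then have "0 < b / 6 - 2 * b * \<rho>^2 - 6 * \<rho>"
    using b by linarith
  moreover have "0 < S"
    using S2 unfolding S_def .
  ultimately have "6 * \<rho> * S < (b / 6 - 2 * b * \<rho>^2) * S"
    by (intro mult_strict_right_mono) auto
  moreover have "K * S \<le> 6 * \<rho> * S"
    using K \<open>0 < S\<close> unfolding K_def by (intro mult_right_mono) auto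
  ultimately have "K * S < b * (S / 6 - 2 * \<rho>^2 * S)"
    by (simp add: algebra_simps)
  also have "\<dots> \<le> b * ((k0 - K/3 - K * z0)^2 + (k1 - K/3 - K * z1)^2 + (k2 - K/3 - K * z2)^2)"
    using sum_deviation_power2_lower_bound[OF assms(1) z] b
    unfolding K_def S_def by (intro mult_left_mono) auto
  finally show ?thesis
    unfolding S_def .
qed

lemma bnn_excess_U0_le_near_barycentre:
  assumes "0 < e" "e < 1" "x \<in> simplex4" "dispersion x \<le> \<rho>^2" "0 \<le> \<rho>"
  shows "bnn_excess (U0 e) x 0 \<le> 2 * \<rho>" "bnn_excess (U0 e) x 1 \<le> 2 * \<rho>"
    "bnn_excess (U0 e) x 2 \<le> 2 * \<rho>"
proof -
  have "(centred x 0)^2 + (centred x 1)^2 + (centred x 2)^2 \<le> \<rho>^2"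
    using sum_centred_power2[of x] dispersion_nonneg[of x] assms(4) by linarith
  then have "(centred x i)^2 \<le> \<rho>^2" if "i \<in> {0, 1, 2}" for i
    using that zero_le_power2[of "centred x 0"] zero_le_power2[of "centred x 1"]
      zero_le_power2[of "centred x 2"] by (auto; linarith)
  then have abs_centred: "\<bar>centred x i\<bar> \<le> \<rho>" if "i \<in> {0, 1, 2}" for i
    using that \<open>0 \<le> \<rho>\<close> by (simp add: power2_le_iff_abs_le)
  have e_le_abs: "e * t \<le> \<bar>t\<bar>" for t
    using mult_left_mono[OF abs_ge_self[of t], of e] mult_right_mono[of e 1 "\<bar>t\<bar>"] assms(1,2)
    by linarith
  have "0 \<le> (1 - e) / 3 * dispersion x"
    using assms(2) dispersion_nonneg[of x] by simp
  then show "bnn_excess (U0 e) x 0 \<le> 2 * \<rho>" "bnn_excess (U0 e) x 1 \<le> 2 * \<rho>"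
    "bnn_excess (U0 e) x 2 \<le> 2 * \<rho>"
    using bnn_excess_U0(1-3)[of x e] assms(3) abs_centred[of 0] abs_centred[of 1] abs_centred[of 2]
      e_le_abs[of "centred x 0"] e_le_abs[of "centred x 1"] e_le_abs[of "centred x 2"]
      abs_ge_minus_self[of "centred x 0"] abs_ge_minus_self[of "centred x 1"]
      abs_ge_minus_self[of "centred x 2"]
    unfolding simplex4_iff by auto
qed

lemma bnn_excess_U0_some_nonpos:
  assumes "e \<le> 1" "x \<in> simplex4"
  shows "bnn_excess (U0 e) x 0 \<le> 0 \<or> bnn_excess (U0 e) x 1 \<le> 0 \<or> bnn_excess (U0 e) x 2 \<le> 0"
proof -
  have sum1: "x$0 + x$1 + x$2 + x$3 = 1"
    using assms(2) unfolding simplex4_iff by simp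
  have "bnn_excess (U0 e) x 0 + bnn_excess (U0 e) x 1 + bnn_excess (U0 e) x 2
      = (e - 1) * (centred x 0 + centred x 1 + centred x 2) - 3 * ((1 - e) / 3 * dispersion x)"
    unfolding bnn_excess_U0[OF sum1] by (simp add: field_simps)
  also have "\<dots> \<le> 0"
    using sum_centred[of x] assms(1) dispersion_nonneg[of x] by simp
  finally show ?thesis
    by linarith
qed

lemma bnn_lyapunov_deriv_U0_pos:
  assumes e: "0 < e" "e < 1" and x: "x \<in> simplex4"
    and near: "dispersion x \<le> ((1 - e) / 200)^2" and pos: "0 < bnn_lyapunov (U0 e) x"
  shows "0 < bnn_lyapunov_deriv (U0 e) (U0 e) x"
proof -
  define \<rho> where "\<rho> = (1 - e) / 200"
  define k where "k = bnn_k (U0 e) x"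
  define K where "K = k 0 + k 1 + k 2"
  have "0 < (k 0)^2 + (k 1)^2 + (k 2)^2"
    using pos bnn_k_U0_3[of e x] e x unfolding bnn_lyapunov_def sum_UNIV_4 k_def by simp
  moreover have "(centred x 0)^2 + (centred x 1)^2 + (centred x 2)^2 \<le> \<rho>^2"
    using sum_centred_power2[of x] dispersion_nonneg[of x] near unfolding \<rho>_def by linarith
  moreover have "K \<le> 6 * \<rho>"
    using bnn_excess_U0_le_near_barycentre[OF e x near] e
    unfolding K_def k_def bnn_k_eq_max_excess \<rho>_def by simp
  moreover have "k 0 = 0 \<or> k 1 = 0 \<or> k 2 = 0"
    using bnn_excess_U0_some_nonpos[of e x] e x unfolding k_def bnn_k_eq_max_excess by auto
  ultimately have "K * ((k 0)^2 + (k 1)^2 + (k 2)^2) < (1 - e) / 2 * ((k 0 - K/3 - K * centred x 0)^2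
      + (k 1 - K/3 - K * centred x 1)^2 + (k 2 - K/3 - K * centred x 2)^2)"
    unfolding K_def using e by (intro near_barycentre_estimate) (auto simp: \<rho>_def K_def)
  then show ?thesis
    using bnn_lyapunov_deriv_U0[of e x] e x unfolding k_def[symmetric] K_def[symmetric] by simp
qed

section \<open>Robustness near \<open>U0 \<epsilon>\<close>\<close>

lemma compact_simplex4_Int_ge:
  fixes f :: "real^4 \<Rightarrow> real"
  assumes "continuous_on UNIV f"
  shows "compact (simplex4 \<inter> {x. c \<le> f x})"
  by (intro compact_Int_closed compact_simplex4 closed_Collect_le continuous_on_const assms)

text \<open>Conditions on the simplex alone under which strategy \<open>i\<close> dies out along every BNN
  trajectory of \<open>U\<close> that starts at level at least \<open>g2\<close> of \<open>bnn_lyapunov M\<close>.\<close>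

definition extinction_certificate ::
    "real^4^4 \<Rightarrow> real \<Rightarrow> real \<Rightarrow> real \<Rightarrow> 4 \<Rightarrow> real^4^4 \<Rightarrow> bool" where
  "extinction_certificate M g1 g2 c i U \<longleftrightarrow>
     (\<forall>y\<in>simplex4. g1 \<le> bnn_lyapunov M y \<longrightarrow> bnn_lyapunov M y \<le> g2
        \<longrightarrow> 0 \<le> bnn_lyapunov_deriv M U y) \<and>
     (\<forall>y\<in>simplex4. g1 \<le> bnn_lyapunov M y
        \<longrightarrow> c \<le> (\<Sum>j\<in>UNIV. bnn_k U y j) \<and> bnn_excess U y i \<le> 0)"

lemma bnn_extinction_above_level:
  assumes deriv: "\<forall>t\<ge>0. (x has_vector_derivative bnn_field U (x t)) (at t within {0..})"
    and cert: "extinction_certificate M g1 g2 c i U"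
    and "x 0 \<in> simplex4" "g1 < g2" "g2 \<le> bnn_lyapunov M (x 0)" "0 < c"
  shows "((\<lambda>t. x t $ i) \<longlongrightarrow> 0) at_top"
proof -
  have "x t \<in> simplex4 \<and> g1 \<le> bnn_lyapunov M (x t)" if "0 \<le> t" for t
    using bnn_trajectory_in_simplex4 bnn_lyapunov_stays_above assms that
    unfolding extinction_certificate_def by metis
  then show ?thesis
    using cert unfolding extinction_certificate_def
    by (intro bnn_coordinate_tendsto_0[OF deriv \<open>x 0 \<in> simplex4\<close> \<open>0 < c\<close>]) auto
qed

lemma U0_lyapunov_levels:
  assumes e: "0 < \<epsilon>" "\<epsilon> < 1" and C: "closed C" "C \<subseteq> simplex4" "C \<inter> E0 = {}"
  obtains g1 g2 where "0 < g1" "g1 < g2" "\<forall>x\<in>C. g2 \<le> bnn_lyapunov (U0 \<epsilon>) x"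
    "\<forall>y\<in>simplex4. g1 \<le> bnn_lyapunov (U0 \<epsilon>) y \<longrightarrow> bnn_lyapunov (U0 \<epsilon>) y \<le> g2
       \<longrightarrow> 0 < bnn_lyapunov_deriv (U0 \<epsilon>) (U0 \<epsilon>) y"
proof -
  let ?V = "bnn_lyapunov (U0 \<epsilon>)" and ?far = "simplex4 \<inter> {x. ((1 - \<epsilon>) / 200)^2 \<le> dispersion x}"
  have V_pos: "0 < ?V x" if "x \<in> simplex4" "0 < dispersion x" for x
    using bnn_lyapunov_U0_pos_iff e that by blast
  have "compact C"
    using compact_Int_closed[OF compact_simplex4 \<open>closed C\<close>] \<open>C \<subseteq> simplex4\<close> by (simp add: Int_absorb1)
  moreover have "\<forall>x\<in>C. 0 < ?V x"
    using C V_pos dispersion_pos_if_notin_E0 by blast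
  ultimately obtain a where "0 < a" and a: "\<forall>x\<in>C. a \<le> ?V x"
    using compact_pos_imp_uniformly_pos continuous_on_subset[OF continuous_on_bnn_lyapunov] by blast
  have "\<forall>x\<in>?far. 0 < ?V x"
  proof
    fix x assume "x \<in> ?far"
    moreover have "0 < ((1 - \<epsilon>) / 200)^2"
      using e by simp
    ultimately show "0 < ?V x"
      using V_pos by (meson IntD1 IntD2 mem_Collect_eq order.strict_trans2)
  qed
  then obtain b where "0 < b" and b: "\<forall>x\<in>?far. b \<le> ?V x"
    using compact_pos_imp_uniformly_pos[OF compact_simplex4_Int_ge[OF continuous_on_dispersion]]
      continuous_on_subset[OF continuous_on_bnn_lyapunov] by blast
  show ?thesis
  proof
    show "0 < min a b / 4" "min a b / 4 < min a b / 2" "\<forall>x\<in>C. min a b / 2 \<le> ?V x"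
      using \<open>0 < a\<close> \<open>0 < b\<close> a by force+
    show "\<forall>y\<in>simplex4. min a b / 4 \<le> ?V y \<longrightarrow> ?V y \<le> min a b / 2
        \<longrightarrow> 0 < bnn_lyapunov_deriv (U0 \<epsilon>) (U0 \<epsilon>) y"
    proof (intro ballI impI bnn_lyapunov_deriv_U0_pos[OF e])
      fix y assume "y \<in> simplex4" "min a b / 4 \<le> ?V y" "?V y \<le> min a b / 2"
      then show "dispersion y \<le> ((1 - \<epsilon>) / 200)^2" "0 < ?V y"
        using b \<open>0 < a\<close> \<open>0 < b\<close> by force+
    qed
  qed
qed

text \<open>The conditions of an extinction certificate hold strictly at \<open>U = M\<close> on compact sets, hence
  uniformly for \<open>U\<close> near \<open>M\<close>.\<close>

lemma eventually_nhds_extinction_certificate: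
  assumes band: "\<forall>y\<in>simplex4. g1 \<le> bnn_lyapunov M y \<longrightarrow> bnn_lyapunov M y \<le> g2
                   \<longrightarrow> 0 < bnn_lyapunov_deriv M M y"
    and above: "\<forall>y\<in>simplex4. g1 \<le> bnn_lyapunov M y
                  \<longrightarrow> 0 < (\<Sum>j\<in>UNIV. bnn_k M y j) \<and> bnn_excess M y i < 0"
  shows "\<exists>c>0. \<forall>\<^sub>F U in nhds M. extinction_certificate M g1 g2 c i U"
proof -
  define R where "R = simplex4 \<inter> {y. g1 \<le> bnn_lyapunov M y}"
  define B where "B = R \<inter> {y. bnn_lyapunov M y \<le> g2}"
  have "compact R"
    unfolding R_def by (rule compact_simplex4_Int_ge[OF continuous_on_bnn_lyapunov])
  then have "compact B"
    unfolding B_def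
    by (intro compact_Int_closed closed_Collect_le continuous_on_bnn_lyapunov continuous_on_const)
  moreover have "\<forall>y\<in>B. 0 < bnn_lyapunov_deriv M M y"
    using band unfolding B_def R_def by blast
  ultimately obtain c1 where "0 < c1"
    and c1: "\<forall>\<^sub>F U in nhds M. \<forall>y\<in>B. c1 \<le> bnn_lyapunov_deriv M U y"
    using eventually_nhds_uniformly_pos[where g="bnn_lyapunov_deriv M",
        OF continuous_on_bnn_lyapunov_deriv] by blast
  have "continuous_on UNIV (\<lambda>p::(real^4^4) \<times> (real^4). \<Sum>j\<in>UNIV. bnn_k (fst p) (snd p) j)"
    by (intro continuous_on_sum continuous_on_bnn_k)
  moreover have "\<forall>y\<in>R. 0 < (\<Sum>j\<in>UNIV. bnn_k M y j)"
    using above unfolding R_def by blast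
  ultimately obtain c where "0 < c" and c: "\<forall>\<^sub>F U in nhds M. \<forall>y\<in>R. c \<le> (\<Sum>j\<in>UNIV. bnn_k U y j)"
    using eventually_nhds_uniformly_pos[where g="\<lambda>U y. \<Sum>j\<in>UNIV. bnn_k U y j", OF _ \<open>compact R\<close>]
    by blast
  have "\<forall>y\<in>R. 0 < - bnn_excess M y i"
    using above unfolding R_def by simp
  then obtain c3 where "0 < c3" and c3: "\<forall>\<^sub>F U in nhds M. \<forall>y\<in>R. c3 \<le> - bnn_excess U y i"
    using eventually_nhds_uniformly_pos[where g="\<lambda>U y. - bnn_excess U y i",
        OF continuous_on_minus[OF continuous_on_bnn_excess] \<open>compact R\<close>] by blast
  have "\<forall>\<^sub>F U in nhds M. extinction_certificate M g1 g2 c i U"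
    using eventually_conj[OF c1 eventually_conj[OF c c3]]
  proof eventually_elim
    case (elim U)
    then have "0 \<le> bnn_lyapunov_deriv M U y" if "y \<in> B" for y
      using \<open>0 < c1\<close> that by (meson less_le_trans less_imp_le)
    moreover from elim have "c \<le> (\<Sum>j\<in>UNIV. bnn_k U y j) \<and> bnn_excess U y i \<le> 0"
      if "y \<in> R" for y
      using \<open>0 < c3\<close> that by (meson neg_0_le_iff_le less_le_trans less_imp_le)
    ultimately show ?case
      unfolding extinction_certificate_def B_def R_def by blast
  qed
  then show ?thesis
    using \<open>0 < c\<close> by blast
qed

theorem proposition4:
  fixes \<epsilon> :: real and C :: "(real^4) set"
  assumes "0 < \<epsilon>" "\<epsilon> < 1"
    and "closed C" "C \<subseteq> simplex4" "C \<inter> E0 = {}"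
  shows "\<exists>N :: (real^4^4) set. open N \<and> U0 \<epsilon> \<in> N \<and>
    (\<forall>U\<in>N. \<forall>x :: real \<Rightarrow> real^4.
       x 0 \<in> C \<and>
       (\<forall>t\<ge>0. (x has_vector_derivative bnn_field U (x t)) (at t within {0..}))
       \<longrightarrow> ((\<lambda>t. x t $ 3) \<longlongrightarrow> 0) at_top)"
proof -
  let ?V = "bnn_lyapunov (U0 \<epsilon>)"
  obtain g1 g2 where "0 < g1" "g1 < g2" and C: "\<forall>x\<in>C. g2 \<le> ?V x"
    and band: "\<forall>y\<in>simplex4. g1 \<le> ?V y \<longrightarrow> ?V y \<le> g2
                 \<longrightarrow> 0 < bnn_lyapunov_deriv (U0 \<epsilon>) (U0 \<epsilon>) y"
    using U0_lyapunov_levels[OF assms] by blast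
  have "0 < (\<Sum>j\<in>UNIV. bnn_k (U0 \<epsilon>) y j) \<and> bnn_excess (U0 \<epsilon>) y 3 < 0"
    if "y \<in> simplex4" "g1 \<le> ?V y" for y
    using that \<open>0 < g1\<close> assms(1,2) bnn_lyapunov_pos_imp_sum_bnn_k_pos bnn_excess_U0_3_neg
      bnn_lyapunov_U0_pos_iff by force
  then obtain c where "0 < c"
    and "\<forall>\<^sub>F U in nhds (U0 \<epsilon>). extinction_certificate (U0 \<epsilon>) g1 g2 c 3 U"
    using eventually_nhds_extinction_certificate[OF band] by blast
  then obtain N where "open N" "U0 \<epsilon> \<in> N"
    and N: "\<forall>U\<in>N. extinction_certificate (U0 \<epsilon>) g1 g2 c 3 U"
    unfolding eventually_nhds by blast
  show ?thesis
  proof (intro exI[of _ N] conjI ballI allI impI)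
    fix U and x :: "real \<Rightarrow> real^4"
    assume "U \<in> N"
      and "x 0 \<in> C \<and> (\<forall>t\<ge>0. (x has_vector_derivative bnn_field U (x t)) (at t within {0..}))"
    then show "((\<lambda>t. x t $ 3) \<longlongrightarrow> 0) at_top"
      using bnn_extinction_above_level N C \<open>g1 < g2\<close> \<open>0 < c\<close> assms(4) by blast
  qed (use \<open>open N\<close> \<open>U0 \<epsilon> \<in> N\<close> in auto)
qed

end
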